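(* Let $\hat N$ be any population size estimator which is consistent for the model consisting of all probability vectors $(p_x)_{x\in\{0,1\}^L}$ with all $p_x>0$ and $\gamma=0$ (no full-way interaction). Then for any probability vector $(p_x)_{x\in\{0,1\}^L}$ with all $p_x>0$ (with $\gamma$ not necessarily zero), the asymptotic relative bias of $\hat N$ exists and equals $$\lim_{N\to\infty}\frac{\hat N - N}{N} = p_{\mathbf{0}}\,(e^{\gamma}-1)\quad\text{almost surely}.$$
   Context: Multiple systems estimation setting with $L\ge 2$ lists: individuals $i=1,2,3,\dots$ have independent, identically distributed list inclusion patterns $W_i\in\{0,1\}^L$ with $\mathbb{P}(W_i=x)=p_x>0$ for every $x\in\{0,1\}^L$; $\mathbf{0}=(0,\dots,0)$ denotes non-observation. For population size $N$, the observed counts are $n_x^{(N)}=\#\{i\le N: W_i=x\}$, $x\neq\mathbf{0}$. A population size estimator $\hat N$ is a function of the observed counts; it is consistent for a model (set of probability vectors) if $\hat N\big((n_x^{(N)})_{x\ne\mathbf{0}}\big)/N\to1$ almost surely as $N\to\infty$ whenever $(p_x)$ belongs to the model. The full-way interaction term is $\gamma=\sum_{x\in\{0,1\}^L}(-1)^{|x|+1}\log p_x$, where $|x|=\sum_i x_i$. The asymptotic relative bias is $\lim_{N\to\infty}(\hat N-N)/N$ when this limit exists and is almost surely constant. *)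

theory Defs
  imports "HOL-Probability.Probability"
begin

definition patterns :: "nat \<Rightarrow> bool list set" where
  "patterns L = {xs. length xs = L}"

definition zero_pattern :: "nat \<Rightarrow> bool list" where
  "zero_pattern L = replicate L False"

text \<open>|x| = number of lists containing the individual.\<close>
definition pat_weight :: "bool list \<Rightarrow> nat" where
  "pat_weight x = length (filter id x)"

definition full_interaction :: "nat \<Rightarrow> bool list pmf \<Rightarrow> real" where
  "full_interaction L Q =
     (\<Sum>x\<in>patterns L. (-1) ^ (pat_weight x + 1) * ln (pmf Q x))"

text \<open>Law of the i.i.d. sequence W_1, W_2, ... (indexed from 0).\<close>
definition iid_patterns :: "bool list pmf \<Rightarrow> (nat \<Rightarrow> bool list) measure" where
  "iid_patterns Q = PiM UNIV (\<lambda>_::nat. measure_pmf Q)"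

text \<open>Observed counts n_x^(N) for x \<noteq> 0 (set to 0 at unobservable / invalid indices,
  so an estimator applied to them is a function of the observed counts only).\<close>
definition obs_counts :: "nat \<Rightarrow> (nat \<Rightarrow> bool list) \<Rightarrow> nat \<Rightarrow> bool list \<Rightarrow> nat" where
  "obs_counts L \<omega> N x =
     (if x \<in> patterns L \<and> x \<noteq> zero_pattern L then card {i. i < N \<and> \<omega> i = x} else 0)"

text \<open>Model: probability vectors over {0,1}^L with all entries positive.\<close>
definition positive_model :: "nat \<Rightarrow> bool list pmf \<Rightarrow> bool" where
  "positive_model L Q \<longleftrightarrow> set_pmf Q = patterns L"

definition consistent_for :: "nat \<Rightarrow> ((bool list \<Rightarrow> nat) \<Rightarrow> real) \<Rightarrow> (bool list pmf \<Rightarrow> bool) \<Rightarrow> bool" where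
  "consistent_for L Nhat model \<longleftrightarrow>
     (\<forall>Q. model Q \<longrightarrow>
        (AE \<omega> in iid_patterns Q. (\<lambda>N. Nhat (obs_counts L \<omega> N) / real N) \<longlonglongrightarrow> 1))"

end

theory Submission
  imports Defs
begin

(* Call an individual observed if its inclusion pattern is non-zero. In order of appearance,
   the observed patterns form an i.i.d. sequence whose law R is Q conditioned on being observed,
   and the counts after N individuals are a function of the first n(N) observed patterns, where
   n(N) / N tends to 1 - p0 almost surely. Hence a statistic of the observed patterns, divided by
   N, tends to l (1 - p0) almost surely iff, evaluated on the first k observed patterns and divided
   by k, it tends to l almost surely under R: a condition on R alone. Multiplying Q by
   c = 1 / (1 - p0 + p0 exp gamma) on the observed patterns and giving mass c p0 exp gamma to the
   zero pattern yields a law Q' with the same R and no full-way interaction. Consistency under Q'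
   gives l = 1 / (c (1 - p0)), so under Q the estimate divided by N tends to 1 / c
   = 1 + p0 (exp gamma - 1). *)

section \<open>Strong law of large numbers for bounded functions\<close>

lemma (in prob_space) indep_vars_PiM_components:
  assumes "I \<noteq> {}"
  shows "prob_space.indep_vars (PiM UNIV (\<lambda>_::nat. M)) (\<lambda>_. M) (\<lambda>i \<omega>. \<omega> i) I"
proof -
  interpret S: prob_space "PiM UNIV (\<lambda>_::nat. M)" by (intro prob_space_PiM prob_space_axioms)
  have "distr (PiM UNIV (\<lambda>_::nat. M)) (PiM I (\<lambda>_. M)) (\<lambda>\<omega>. \<lambda>i\<in>I. \<omega> i) = PiM I (\<lambda>_. M)"
    using distr_PiM_reindex[of UNIV "\<lambda>_. M" id I] by (simp add: prob_space_axioms)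
  moreover have "distr (PiM UNIV (\<lambda>_::nat. M)) M (\<lambda>\<omega>. \<omega> i) = M" for i
    by (rule distr_PiM_component) (simp_all add: prob_space_axioms)
  ultimately show ?thesis
    by (subst S.indep_vars_iff_distr_eq_PiM'[OF assms]) simp_all
qed

lemma (in prob_space) prob_iid_average_deviation_le:
  fixes f :: "'a \<Rightarrow> real"
  assumes f: "f \<in> borel_measurable M" "\<And>x. x \<in> space M \<Longrightarrow> f x \<in> {a..b}" and "a < b"
    and "n > 0" "e \<ge> 0"
  shows "measure (PiM UNIV (\<lambda>_::nat. M))
           {\<omega> \<in> space (PiM UNIV (\<lambda>_::nat. M)). e \<le> \<bar>(\<Sum>i<n. f (\<omega> i)) / n - expectation f\<bar>}
         \<le> 2 * exp (- 2 * n * e\<^sup>2 / (b - a)\<^sup>2)"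
proof -
  let ?S = "PiM UNIV (\<lambda>_::nat. M)"
  interpret S: prob_space ?S by (intro prob_space_PiM prob_space_axioms)
  have comp: "(\<lambda>\<omega>. \<omega> i) \<in> ?S \<rightarrow>\<^sub>M M" for i
    by (rule measurable_component_singleton) simp
  have distr_comp: "distr ?S M (\<lambda>\<omega>. \<omega> i) = M" for i
    by (rule distr_PiM_component) (simp_all add: prob_space_axioms)
  have distr_f: "distr ?S borel (\<lambda>\<omega>. f (\<omega> i)) = distr M borel f" for i
    using distr_distr[OF f(1) comp, of i] by (simp add: o_def distr_comp)
  have expectation_f: "S.expectation (\<lambda>\<omega>. f (\<omega> 0)) = expectation f"
    using integral_distr[OF comp f(1), of 0] by (simp add: distr_comp)
  interpret H: Hoeffding_ineq_iid ?S "{..<n}" "\<lambda>i \<omega>. f (\<omega> i)" "\<lambda>\<omega>. f (\<omega> 0)" a b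
      "S.expectation (\<lambda>\<omega>. f (\<omega> 0))"
  proof unfold_locales
    show "S.indep_vars (\<lambda>_. borel) (\<lambda>i \<omega>. f (\<omega> i)) {..<n}"
      using S.indep_vars_compose2[OF indep_vars_PiM_components, of "{..<n}" "\<lambda>_. f" "\<lambda>_. borel"]
        f(1) \<open>n > 0\<close> by auto
    show "(\<lambda>\<omega>. f (\<omega> 0)) \<in> borel_measurable ?S"
      using measurable_comp[OF comp f(1)] by (simp add: o_def)
    show "AE \<omega> in ?S. f (\<omega> 0) \<in> {a..b}"
      using f(2) measurable_space[OF comp] by auto
  qed (simp_all add: distr_f)
  show ?thesis
    using H.Hoeffding_ineq_abs_ge'[OF \<open>e \<ge> 0\<close> \<open>a < b\<close>] \<open>n > 0\<close>
    by (simp add: expectation_f lessThan_empty_iff)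
qed

text \<open>Hoeffding's inequality makes the deviation probabilities summable, so Borel-Cantelli applies.\<close>

lemma (in prob_space) AE_eventually_iid_average_deviation_less:
  fixes f :: "'a \<Rightarrow> real"
  assumes f: "f \<in> borel_measurable M" "\<And>x. x \<in> space M \<Longrightarrow> f x \<in> {a..b}" and "e > 0"
  shows "AE \<omega> in PiM UNIV (\<lambda>_::nat. M).
           eventually (\<lambda>n. \<bar>(\<Sum>i<n. f (\<omega> i)) / n - expectation f\<bar> < e) sequentially"
proof -
  let ?S = "PiM UNIV (\<lambda>_::nat. M)"
  interpret S: prob_space ?S by (intro prob_space_PiM prob_space_axioms)
  have comp: "(\<lambda>\<omega>. \<omega> i) \<in> ?S \<rightarrow>\<^sub>M M" for i
    by (rule measurable_component_singleton) simp
  have [measurable]: "(\<lambda>\<omega>. f (\<omega> i)) \<in> borel_measurable ?S" for i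
    using measurable_comp[OF comp f(1)] by (simp add: o_def)
  define b' where "b' = max b (a + 1)"
  have f': "x \<in> space M \<Longrightarrow> f x \<in> {a..b'}" for x using f(2) by (force simp: b'_def)
  define q where "q = exp (- 2 * e\<^sup>2 / (b' - a)\<^sup>2)"
  have "q < 1" using \<open>e > 0\<close> by (simp add: q_def b'_def)
  define A where "A n = {\<omega> \<in> space ?S. e \<le> \<bar>(\<Sum>i<n. f (\<omega> i)) / n - expectation f\<bar>}" for n
  have [measurable]: "A n \<in> sets ?S" for n unfolding A_def by measurable
  have bound: "measure ?S (A n) \<le> 2 * q ^ n" for n
  proof (cases "n = 0")
    case False
    then have "measure ?S (A n) \<le> 2 * exp (- 2 * real n * e\<^sup>2 / (b' - a)\<^sup>2)"
      unfolding A_def using f(1) f' \<open>e > 0\<close>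
      by (intro prob_iid_average_deviation_le) (auto simp: b'_def)
    also have "\<dots> = 2 * q ^ n"
      by (simp add: q_def exp_of_nat_mult[symmetric])
    finally show ?thesis .
  qed (simp add: order_trans[OF S.prob_le_1])
  have "summable (\<lambda>n. 2 * q ^ n)"
    using \<open>q < 1\<close> by (intro summable_mult summable_geometric) (simp add: q_def)
  then have "summable (\<lambda>n. measure ?S (A n))"
    by (rule summable_comparison_test') (simp add: bound)
  then have "AE \<omega> in ?S. eventually (\<lambda>n. \<omega> \<in> space ?S - A n) sequentially"
    by (intro borel_cantelli_AE1) (simp_all add: S.emeasure_eq_measure)
  then show ?thesis
    by eventually_elim (auto elim!: eventually_mono simp: A_def)
qed

theorem (in prob_space) AE_iid_average_tendsto:
  fixes f :: "'a \<Rightarrow> real"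
  assumes "f \<in> borel_measurable M" "\<And>x. x \<in> space M \<Longrightarrow> f x \<in> {a..b}"
  shows "AE \<omega> in PiM UNIV (\<lambda>_::nat. M). (\<lambda>n. (\<Sum>i<n. f (\<omega> i)) / n) \<longlonglongrightarrow> expectation f"
proof -
  have "AE \<omega> in PiM UNIV (\<lambda>_::nat. M). \<forall>m.
      eventually (\<lambda>n. \<bar>(\<Sum>i<n. f (\<omega> i)) / n - expectation f\<bar> < 1 / Suc m) sequentially"
    using AE_eventually_iid_average_deviation_less[OF assms] by (subst AE_all_countable) simp
  then show ?thesis
  proof eventually_elim
    case (elim \<omega>)
    show ?case
    proof (rule tendstoI)
      fix e :: real assume "e > 0"
      then obtain m where "1 / Suc m < e" using reals_Archimedean by (auto simp: inverse_eq_divide)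
      then show "eventually (\<lambda>n. dist ((\<Sum>i<n. f (\<omega> i)) / n) (expectation f) < e) sequentially"
        using elim[rule_format, of m] by (auto elim!: eventually_mono simp: dist_real_def)
    qed
  qed
qed

section \<open>Ratio limits under a counting time change\<close>

lemma filterlim_at_top_if_ratio_tendsto_pos:
  fixes S :: "nat \<Rightarrow> nat"
  assumes "(\<lambda>N. S N / N) \<longlonglongrightarrow> a" "a > 0"
  shows "filterlim S at_top sequentially"
proof -
  have "filterlim (\<lambda>N. S N / N * N) at_top sequentially"
    using filterlim_tendsto_pos_mult_at_top[OF assms filterlim_real_sequentially] .
  moreover have "eventually (\<lambda>N. S N / N * N = real (S N)) sequentially"
    using eventually_gt_at_top[of 0] by eventually_elim simp
  ultimately show ?thesis
    by (simp add: filterlim_sequentially_iff_filterlim_real filterlim_cong)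
qed

lemma obtain_first_passage_times:
  fixes S :: "nat \<Rightarrow> nat"
  assumes S0: "S 0 = 0" and step: "\<And>N. S (Suc N) = S N \<or> S (Suc N) = Suc (S N)"
    and S_at_top: "filterlim S at_top sequentially"
  obtains \<nu> where "strict_mono \<nu>" "\<And>k. S (\<nu> k) = k"
proof -
  have hit: "\<exists>m\<le>N. S m = k" if "k \<le> S N" for k N
  proof -
    have "\<bar>int (S (Suc i)) - int (S i)\<bar> \<le> 1" for i
      using step[of i] by auto
    then show ?thesis
      using nat0_intermed_int_val[of N "\<lambda>i. int (S i)" "int k"] S0 that by auto
  qed
  define \<nu> where "\<nu> k = (LEAST N. S N = k)" for k
  have S_\<nu>: "S (\<nu> k) = k" for k
  proof -
    obtain N where "k \<le> S N"
      using S_at_top unfolding filterlim_at_top eventually_sequentially by blast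
    then have "\<exists>m. S m = k" using hit by blast
    then show ?thesis
      unfolding \<nu>_def by (rule LeastI_ex)
  qed
  have "\<nu> k < \<nu> (Suc k)" for k
  proof -
    obtain m where "m \<le> \<nu> (Suc k)" "S m = k"
      using hit[of k "\<nu> (Suc k)"] by (auto simp: S_\<nu>)
    moreover have "\<nu> k \<le> m"
      unfolding \<nu>_def using \<open>S m = k\<close> by (rule Least_le)
    moreover have "m \<noteq> \<nu> (Suc k)"
      using S_\<nu>[of "Suc k"] \<open>S m = k\<close> by auto
    ultimately show ?thesis by linarith
  qed
  then have "strict_mono \<nu>" by (simp add: strict_mono_Suc_iff)
  then show ?thesis using S_\<nu> by (rule that)
qed

lemma LIMSEQ_counting_time_change_iff:
  fixes S :: "nat \<Rightarrow> nat" and g :: "nat \<Rightarrow> real"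
  assumes S0: "S 0 = 0" and step: "\<And>N. S (Suc N) = S N \<or> S (Suc N) = Suc (S N)"
    and rate: "(\<lambda>N. S N / N) \<longlonglongrightarrow> a" and "a > 0"
  shows "(\<lambda>N. g (S N) / N) \<longlonglongrightarrow> l * a \<longleftrightarrow> (\<lambda>k. g k / k) \<longlonglongrightarrow> l"
proof -
  have S_at_top: "filterlim S at_top sequentially"
    by (rule filterlim_at_top_if_ratio_tendsto_pos[OF rate \<open>a > 0\<close>])
  show ?thesis
  proof
    assume lim: "(\<lambda>N. g (S N) / N) \<longlonglongrightarrow> l * a"
    obtain \<nu> where "strict_mono \<nu>" and S_\<nu>: "\<And>k. S (\<nu> k) = k"
      using obtain_first_passage_times[OF S0 step S_at_top] by blast
    then have \<nu>_at_top: "filterlim \<nu> at_top sequentially"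
      by (intro filterlim_subseq)
    have "(\<lambda>k. (g k / \<nu> k) / (k / \<nu> k)) \<longlonglongrightarrow> (l * a) / a"
      using filterlim_compose[OF lim \<nu>_at_top] filterlim_compose[OF rate \<nu>_at_top] \<open>a > 0\<close>
      by (intro tendsto_divide) (simp_all add: S_\<nu>)
    moreover have "eventually (\<lambda>k. (g k / \<nu> k) / (k / \<nu> k) = g k / k) sequentially"
      using eventually_gt_at_top[of 0]
    proof eventually_elim
      case (elim k)
      then have "\<nu> k \<noteq> 0" using S_\<nu>[of k] S0 by (intro notI) simp
      then show ?case by simp
    qed
    ultimately show "(\<lambda>k. g k / k) \<longlonglongrightarrow> l"
      using \<open>a > 0\<close> by (simp add: Lim_transform_eventually)
  next
    assume lim: "(\<lambda>k. g k / k) \<longlonglongrightarrow> l"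
    have "eventually (\<lambda>N. 1 \<le> S N) sequentially"
      using S_at_top unfolding filterlim_at_top by blast
    then have "eventually (\<lambda>N. g (S N) / S N * (S N / N) = g (S N) / N) sequentially"
      by eventually_elim simp
    moreover have "(\<lambda>N. g (S N) / S N * (S N / N)) \<longlonglongrightarrow> l * a"
      using filterlim_compose[OF lim S_at_top] rate by (rule tendsto_mult)
    ultimately show "(\<lambda>N. g (S N) / N) \<longlonglongrightarrow> l * a"
      by (rule Lim_transform_eventually[rotated])
  qed
qed

lemma LIMSEQ_relative_error:
  fixes x :: "nat \<Rightarrow> real"
  assumes "(\<lambda>N. x N / N) \<longlonglongrightarrow> 1 + r"
  shows "(\<lambda>N. (x N - N) / N) \<longlonglongrightarrow> r"
proof -
  have "(\<lambda>N. x N / N - 1) \<longlonglongrightarrow> r"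
    using tendsto_diff[OF assms tendsto_const[of 1]] by simp
  moreover have "eventually (\<lambda>N. x N / N - 1 = (x N - N) / N) sequentially"
    using eventually_gt_at_top[of 0] by eventually_elim (simp add: diff_divide_distrib)
  ultimately show ?thesis by (rule Lim_transform_eventually)
qed

section \<open>Rescaling a probability mass function\<close>

lemma measure_pmf_eq_scaled:
  assumes "\<And>x. x \<in> A \<Longrightarrow> pmf Q' x = c * pmf Q x"
  shows "measure_pmf.prob Q' A = c * measure_pmf.prob Q A"
proof -
  have "infsetsum (pmf Q') A = infsetsum (\<lambda>x. c * pmf Q x) A"
    using assms by (intro infsetsum_cong) simp_all
  also have "\<dots> = c * infsetsum (pmf Q) A"
    by (rule infsetsum_cmult_right) (rule pmf_abs_summable)
  finally show ?thesis by (simp add: measure_pmf_conv_infsetsum)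
qed

lemma set_pmf_inter_eq_scaled:
  assumes "\<And>x. x \<in> A \<Longrightarrow> pmf Q' x = c * pmf Q x" and "c > 0"
  shows "set_pmf Q' \<inter> A = set_pmf Q \<inter> A"
  using assms by (auto simp: set_pmf_iff)

lemma cond_pmf_eq_scaled:
  assumes "\<And>x. x \<in> A \<Longrightarrow> pmf Q' x = c * pmf Q x" and "c > 0" and "set_pmf Q \<inter> A \<noteq> {}"
  shows "cond_pmf Q' A = cond_pmf Q A"
  using assms set_pmf_inter_eq_scaled[OF assms(1,2)]
  by (intro pmf_eqI) (simp add: pmf_cond measure_pmf_eq_scaled)

lemma one_minus_plus_mult_exp_pos: "0 \<le> p \<Longrightarrow> p \<le> 1 \<Longrightarrow> 0 < 1 - p + p * exp (t::real)"
  by (cases "p = 1") (auto intro: add_pos_nonneg)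

lemma obtain_pmf_tilted_at:
  fixes Q :: "'a pmf" and z :: 'a and t :: real
  defines "c \<equiv> 1 / (1 - pmf Q z + pmf Q z * exp t)"
  obtains Q' where "pmf Q' z = c * pmf Q z * exp t" and "\<And>x. x \<noteq> z \<Longrightarrow> pmf Q' x = c * pmf Q x"
proof -
  define w where "w x = c + c * (exp t - 1) * indicator {z} x" for x
  have den: "0 < 1 - pmf Q z + pmf Q z * exp t"
    by (rule one_minus_plus_mult_exp_pos) (simp_all add: pmf_le_1)
  then have "c > 0" by (simp add: c_def)
  have w_eq: "w x = (if x = z then c * exp t else c)" for x
    by (simp add: w_def algebra_simps)
  have w_nonneg: "0 \<le> w x" for x
    using \<open>c > 0\<close> by (simp add: w_eq)
  have "measure_pmf.expectation Q w = c + c * (exp t - 1) * pmf Q z"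
    unfolding w_def
    by (subst Bochner_Integration.integral_add)
      (auto simp: measure_pmf_single intro: measure_pmf.integrable_const_bound[where B = 1])
  also have "\<dots> = c * (1 - pmf Q z + pmf Q z * exp t)" by (simp add: algebra_simps)
  also have "\<dots> = 1" using den by (simp add: c_def)
  finally have "measure_pmf.expectation Q w = 1" .
  moreover have "integrable Q w"
    by (rule measure_pmf.integrable_const_bound[where B = "c * exp t + c"])
      (use \<open>c > 0\<close> in \<open>auto simp: w_eq\<close>)
  ultimately have "(\<integral>\<^sup>+x. ennreal (w x) \<partial>Q) = 1"
    using w_nonneg by (simp add: nn_integral_eq_integral)
  then have "(\<integral>\<^sup>+x. ennreal (pmf Q x * w x) \<partial>count_space UNIV) = 1"
    by (simp add: nn_integral_measure_pmf ennreal_mult w_nonneg)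
  then show ?thesis
    using that[of "embed_pmf (\<lambda>x. pmf Q x * w x)"] w_nonneg
    by (simp add: pmf_embed_pmf w_eq)
qed

section \<open>The subsequence of observed individuals\<close>

abbreviation iid :: "'a pmf \<Rightarrow> (nat \<Rightarrow> 'a) measure" where
  "iid P \<equiv> PiM UNIV (\<lambda>_::nat. measure_pmf P)"

definition obs_count :: "('a \<Rightarrow> bool) \<Rightarrow> (nat \<Rightarrow> 'a) \<Rightarrow> nat \<Rightarrow> nat" where
  "obs_count ob \<omega> n = length (filter ob (map \<omega> [0..<n]))"

definition obs_pos :: "('a \<Rightarrow> bool) \<Rightarrow> (nat \<Rightarrow> 'a) \<Rightarrow> nat \<Rightarrow> nat \<Rightarrow> bool" where
  "obs_pos ob \<omega> k n \<longleftrightarrow> ob (\<omega> n) \<and> obs_count ob \<omega> n = k"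

text \<open>\<open>obs_seq ob \<omega> k\<close> is undefined if fewer than \<open>k + 1\<close> individuals are observed;
  this has probability zero.\<close>

definition obs_seq :: "('a \<Rightarrow> bool) \<Rightarrow> (nat \<Rightarrow> 'a) \<Rightarrow> nat \<Rightarrow> 'a" where
  "obs_seq ob \<omega> k = (if \<exists>n. obs_pos ob \<omega> k n then \<omega> (THE n. obs_pos ob \<omega> k n) else undefined)"

lemma obs_count_0 [simp]: "obs_count ob \<omega> 0 = 0"
  by (simp add: obs_count_def)

lemma obs_count_Suc: "obs_count ob \<omega> (Suc n) = obs_count ob \<omega> n + (if ob (\<omega> n) then 1 else 0)"
  by (simp add: obs_count_def)

lemma obs_count_mono: "m \<le> n \<Longrightarrow> obs_count ob \<omega> m \<le> obs_count ob \<omega> n"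
  by (induction n rule: dec_induct) (auto simp: obs_count_Suc)

lemma obs_count_case_nat:
  "obs_count ob (case_nat x \<omega>) (Suc n) = (if ob x then 1 else 0) + obs_count ob \<omega> n"
  by (induction n) (simp_all add: obs_count_Suc)

lemma obs_pos_unique: "obs_pos ob \<omega> k n \<Longrightarrow> obs_pos ob \<omega> k m \<Longrightarrow> n = m"
proof (induction n m rule: linorder_wlog)
  case (le n m)
  show ?case
  proof (rule ccontr)
    assume "n \<noteq> m"
    then have "obs_count ob \<omega> (Suc n) \<le> obs_count ob \<omega> m"
      using le by (intro obs_count_mono) auto
    then show False using le by (simp add: obs_pos_def obs_count_Suc)
  qed
qed (simp add: eq_commute)

lemma obs_seq_eqI: "obs_pos ob \<omega> k n \<Longrightarrow> obs_seq ob \<omega> k = \<omega> n"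
  unfolding obs_seq_def using obs_pos_unique by (metis the_equality)

lemma obs_seq_shift:
  assumes "\<And>n. obs_pos ob \<omega>' k n \<longleftrightarrow> (\<exists>n'. n = Suc n' \<and> obs_pos ob \<omega> k' n')"
    and "\<And>n. \<omega>' (Suc n) = \<omega> n"
  shows "obs_seq ob \<omega>' k = obs_seq ob \<omega> k'"
proof (cases "\<exists>n. obs_pos ob \<omega> k' n")
  case True
  then obtain n where n: "obs_pos ob \<omega> k' n" by blast
  then have "obs_pos ob \<omega>' k (Suc n)" using assms(1) by blast
  then show ?thesis using n assms(2) by (simp add: obs_seq_eqI)
next
  case False
  then have "\<not> (\<exists>n. obs_pos ob \<omega>' k n)" using assms(1) by blast
  then show ?thesis using False by (simp add: obs_seq_def)
qed

lemma obs_seq_case_nat: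
  "obs_seq ob (case_nat x \<omega>) = (if ob x then case_nat x (obs_seq ob \<omega>) else obs_seq ob \<omega>)"
proof
  fix k
  have pos_Suc: "obs_pos ob (case_nat x \<omega>) k (Suc n) \<longleftrightarrow>
      ob (\<omega> n) \<and> (if ob x then 1 else 0) + obs_count ob \<omega> n = k" for n
    by (simp add: obs_pos_def obs_count_case_nat)
  show "obs_seq ob (case_nat x \<omega>) k = (if ob x then case_nat x (obs_seq ob \<omega>) else obs_seq ob \<omega>) k"
  proof (cases "ob x")
    case True
    then show ?thesis
    proof (cases k)
      case 0
      then have "obs_pos ob (case_nat x \<omega>) k 0" using True by (simp add: obs_pos_def)
      then show ?thesis using True 0 by (simp add: obs_seq_eqI)
    next
      case (Suc k')
      have "obs_seq ob (case_nat x \<omega>) k = obs_seq ob \<omega> k'"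
        by (rule obs_seq_shift) (use True Suc pos_Suc in \<open>auto simp: obs_pos_def split: nat.splits\<close>)
      then show ?thesis using True Suc by simp
    qed
  next
    case False
    have "obs_seq ob (case_nat x \<omega>) k = obs_seq ob \<omega> k"
      by (rule obs_seq_shift) (use False pos_Suc in \<open>auto simp: obs_pos_def split: nat.splits\<close>)
    then show ?thesis using False by simp
  qed
qed

lemma filter_map_eq_obs_seq:
  "filter ob (map \<omega> [0..<N]) = map (obs_seq ob \<omega>) [0..<obs_count ob \<omega> N]"
proof (induction N)
  case (Suc N)
  have "ob (\<omega> N) \<Longrightarrow> obs_seq ob \<omega> (obs_count ob \<omega> N) = \<omega> N"
    by (simp add: obs_seq_eqI obs_pos_def)
  then show ?case using Suc by (simp add: obs_count_Suc)
qed simp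

lemma measurable_component_count_space:
  "(\<lambda>\<omega>. \<omega> i) \<in> iid P \<rightarrow>\<^sub>M count_space UNIV"
proof -
  have "(\<lambda>\<omega>. \<omega> i) \<in> iid P \<rightarrow>\<^sub>M measure_pmf P"
    by (rule measurable_component_singleton) simp
  then show ?thesis by (simp add: measurable_cong_sets[OF refl sets_measure_pmf_count_space])
qed

lemma measurable_prefix:
  "(\<lambda>\<omega>. map \<omega> [0..<n]) \<in> iid (P :: 'a::countable pmf) \<rightarrow>\<^sub>M count_space UNIV"
proof (induction n)
  case (Suc n)
  have "(\<lambda>\<omega>. (map \<omega> [0..<n], \<omega> n)) \<in> iid P \<rightarrow>\<^sub>M count_space UNIV \<Otimes>\<^sub>M count_space UNIV"
    using Suc measurable_component_count_space by (rule measurable_Pair)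
  then have "(\<lambda>\<omega>. (map \<omega> [0..<n], \<omega> n)) \<in> iid P \<rightarrow>\<^sub>M count_space (UNIV :: ('a list \<times> 'a) set)"
    by (simp add: pair_measure_countable)
  from measurable_comp[OF this, of "\<lambda>(xs, x). xs @ [x]"] show ?case
    by (simp add: o_def)
qed simp

lemma measurable_prefix_fun:
  assumes "space N = UNIV"
  shows "(\<lambda>\<omega>. f (map \<omega> [0..<n])) \<in> iid (P :: 'a::countable pmf) \<rightarrow>\<^sub>M N"
  using measurable_comp[OF measurable_prefix, of f N] assms by (simp add: o_def)

lemma pred_obs_pos [measurable]: "Measurable.pred (iid (P :: 'a::countable pmf)) (\<lambda>\<omega>. obs_pos ob \<omega> k n)"
proof -
  have "Measurable.pred (iid P)
      (\<lambda>\<omega>. (\<lambda>xs. ob (last xs) \<and> length (filter ob (butlast xs)) = k) (map \<omega> [0..<Suc n]))"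
    by (rule measurable_prefix_fun) simp
  then show ?thesis by (simp add: obs_pos_def obs_count_def)
qed

lemma measurable_obs_seq_component:
  "(\<lambda>\<omega>. obs_seq ob \<omega> k) \<in> iid (P :: 'a::countable pmf) \<rightarrow>\<^sub>M count_space UNIV"
  unfolding obs_seq_def
proof (rule measurable_If)
  have "(\<lambda>\<omega>. THE n. obs_pos ob \<omega> k n) \<in> iid P \<rightarrow>\<^sub>M count_space UNIV"
    by (rule measurable_THE[where I = UNIV]) (auto intro: obs_pos_unique)
  then show "(\<lambda>\<omega>. \<omega> (THE n. obs_pos ob \<omega> k n)) \<in> iid P \<rightarrow>\<^sub>M count_space UNIV"
    by (rule measurable_compose_countable[OF measurable_component_count_space])
qed simp_all

lemma measurable_obs_seq: "obs_seq ob \<in> iid (P :: 'a::countable pmf) \<rightarrow>\<^sub>M iid R"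
proof -
  have "(\<lambda>\<omega> k. obs_seq ob \<omega> k) \<in> iid P \<rightarrow>\<^sub>M iid R"
    using measurable_obs_seq_component
    by (intro measurable_PiM_single') (simp_all add: measurable_cong_sets[OF refl sets_measure_pmf_count_space])
  then show ?thesis by simp
qed

lemma prob_space_iid: "prob_space (iid P)"
  by (intro prob_space_PiM prob_space_measure_pmf)

lemma measure_cond_pmf:
  assumes "set_pmf p \<inter> s \<noteq> {}"
  shows "measure_pmf.prob (cond_pmf p s) A = measure_pmf.prob p (s \<inter> A) / measure_pmf.prob p s"
  using assms by (simp add: cond_pmf.rep_eq emeasure_measure_pmf_not_zero)

lemma measure_iid_case_nat:
  fixes Q :: "'a pmf"
  assumes E: "E \<in> sets (iid Q)"
  shows "measure (iid Q) E = measure_pmf.expectation Q (\<lambda>x. measure (iid Q) {\<omega>. case_nat x \<omega> \<in> E})"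
proof -
  interpret sequence_space "measure_pmf Q" by unfold_locales
  let ?f = "\<lambda>(s, \<omega>). case_nat s \<omega>"
  have f: "?f \<in> measure_pmf Q \<Otimes>\<^sub>M iid Q \<rightarrow>\<^sub>M iid Q" by measurable
  have "emeasure (iid Q) E = emeasure (distr (measure_pmf Q \<Otimes>\<^sub>M iid Q) (iid Q) ?f) E"
    by (simp add: PiM_iter)
  also have "\<dots> = emeasure (measure_pmf Q \<Otimes>\<^sub>M iid Q) (?f -` E \<inter> space (measure_pmf Q \<Otimes>\<^sub>M iid Q))"
    by (rule emeasure_distr[OF f E])
  also have "\<dots> = (\<integral>\<^sup>+x. emeasure (iid Q) (Pair x -` (?f -` E \<inter> space (measure_pmf Q \<Otimes>\<^sub>M iid Q))) \<partial>Q)"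
    by (rule emeasure_pair_measure_alt) (rule measurable_sets[OF f E])
  also have "\<dots> = (\<integral>\<^sup>+x. ennreal (measure (iid Q) {\<omega>. case_nat x \<omega> \<in> E}) \<partial>Q)"
    by (intro nn_integral_cong)
       (simp add: space_pair_measure space_PiM vimage_def emeasure_eq_measure)
  also have "\<dots> = ennreal (measure_pmf.expectation Q (\<lambda>x. measure (iid Q) {\<omega>. case_nat x \<omega> \<in> E}))"
    by (intro nn_integral_eq_integral measure_pmf.integrable_const_bound[where B = 1]) auto
  finally show ?thesis
    by (simp add: emeasure_eq_measure integral_nonneg_AE)
qed

lemma pred_obs_seq_in [measurable]:
  "Measurable.pred (iid (P :: 'a::countable pmf)) (\<lambda>\<omega>. obs_seq ob \<omega> j \<in> A)"
  using measurable_comp[OF measurable_obs_seq_component, of "\<lambda>y. y \<in> A"] by (simp add: o_def)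

lemma measure_obs_seq_prefix:
  fixes Q :: "'a::countable pmf" and ob :: "'a \<Rightarrow> bool"
  defines "R \<equiv> cond_pmf Q (Collect ob)"
  assumes ne: "set_pmf Q \<inter> Collect ob \<noteq> {}"
  shows "measure (iid Q) {\<omega>. \<forall>j<n. obs_seq ob \<omega> j \<in> F j} = (\<Prod>j<n. measure_pmf.prob R (F j))"
proof (induction n arbitrary: F)
  case 0
  show ?case using prob_space.prob_space[OF prob_space_iid] by (simp add: space_PiM)
next
  case (Suc n)
  define a where "a = measure_pmf.prob Q (Collect ob)"
  have "a > 0" unfolding a_def using ne by (auto intro: measure_pmf_posI)
  let ?E = "{\<omega>. \<forall>j<Suc n. obs_seq ob \<omega> j \<in> F j}"
  let ?E' = "{\<omega>. \<forall>j<n. obs_seq ob \<omega> j \<in> F (Suc j)}"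
  have "?E = {\<omega> \<in> space (iid Q). \<forall>j<Suc n. obs_seq ob \<omega> j \<in> F j}" by (simp add: space_PiM)
  also have "\<dots> \<in> sets (iid Q)" by measurable
  finally have E: "?E \<in> sets (iid Q)" .
  \<comment> \<open>conditioning on the first individual gives a renewal equation for the measure of \<open>?E\<close>\<close>
  have slice: "{\<omega>. case_nat x \<omega> \<in> ?E} = (if ob x then if x \<in> F 0 then ?E' else {} else ?E)" for x
    by (auto simp: obs_seq_case_nat All_less_Suc2)
  have "measure (iid Q) ?E = measure_pmf.expectation Q (\<lambda>x. measure (iid Q) {\<omega>. case_nat x \<omega> \<in> ?E})"
    by (rule measure_iid_case_nat[OF E])
  also have "\<dots> = measure_pmf.expectation Q (\<lambda>x.
      measure (iid Q) ?E' * indicator {x. ob x \<and> x \<in> F 0} x + measure (iid Q) ?E * indicator {x. \<not> ob x} x)"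
    unfolding slice by (intro Bochner_Integration.integral_cong) auto
  also have "\<dots> = measure (iid Q) ?E' * measure_pmf.prob Q {x. ob x \<and> x \<in> F 0}
      + measure (iid Q) ?E * measure_pmf.prob Q {x. \<not> ob x}"
    by (simp add: measure_pmf.integrable_const_bound[where B = 1])
  also have "measure_pmf.prob Q {x. ob x \<and> x \<in> F 0} = a * measure_pmf.prob R (F 0)"
    using ne \<open>a > 0\<close> by (simp add: R_def a_def measure_cond_pmf Collect_conj_eq Int_commute)
  also have "measure_pmf.prob Q {x. \<not> ob x} = 1 - a"
    unfolding a_def by (subst measure_pmf.prob_compl[symmetric]) (auto intro!: arg_cong2[where f = measure])
  finally have "a * measure (iid Q) ?E = a * (measure_pmf.prob R (F 0) * measure (iid Q) ?E')"
    by (simp add: algebra_simps)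
  then have "measure (iid Q) ?E = measure_pmf.prob R (F 0) * measure (iid Q) ?E'"
    using \<open>a > 0\<close> by simp
  then show ?case by (simp add: Suc.IH prod.lessThan_Suc_shift del: prod.lessThan_Suc)
qed

lemma distr_obs_seq:
  fixes Q :: "'a::countable pmf" and ob :: "'a \<Rightarrow> bool"
  defines "R \<equiv> cond_pmf Q (Collect ob)"
  assumes ne: "set_pmf Q \<inter> Collect ob \<noteq> {}"
  shows "distr (iid Q) (iid R) (obs_seq ob) = iid R"
proof (rule product_prob_space.PiM_eq)
  show "product_prob_space (\<lambda>_. measure_pmf R)" by unfold_locales
  interpret Q: prob_space "iid Q" by (rule prob_space_iid)
  fix J :: "nat set" and F
  assume J: "finite J" "J \<subseteq> UNIV" and F: "\<And>j. j \<in> J \<Longrightarrow> F j \<in> sets (measure_pmf R)"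
  obtain n where n: "J \<subseteq> {..<n}" using J(1) finite_nat_iff_bounded by auto
  define F' where "F' j = (if j \<in> J then F j else UNIV)" for j
  have "prod_emb UNIV (\<lambda>_. measure_pmf R) J (Pi\<^sub>E J F) \<in> sets (iid R)"
    using J F by (intro sets_PiM_I) auto
  then have "emeasure (distr (iid Q) (iid R) (obs_seq ob)) (prod_emb UNIV (\<lambda>_. measure_pmf R) J (Pi\<^sub>E J F))
      = emeasure (iid Q) (obs_seq ob -` prod_emb UNIV (\<lambda>_. measure_pmf R) J (Pi\<^sub>E J F) \<inter> space (iid Q))"
    by (rule emeasure_distr[OF measurable_obs_seq])
  also have "obs_seq ob -` prod_emb UNIV (\<lambda>_. measure_pmf R) J (Pi\<^sub>E J F) \<inter> space (iid Q)
      = {\<omega>. \<forall>j<n. obs_seq ob \<omega> j \<in> F' j}"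
    using n by (auto simp: prod_emb_def space_PiM F'_def PiE_iff subset_iff)
  also have "emeasure (iid Q) \<dots> = (\<Prod>j<n. emeasure (measure_pmf R) (F' j))"
    using measure_obs_seq_prefix[OF ne, of n F']
    by (simp add: Q.emeasure_eq_measure measure_pmf.emeasure_eq_measure
        R_def prod_ennreal)
  also have "\<dots> = (\<Prod>j<n. if j \<in> J then emeasure (measure_pmf R) (F j) else 1)"
    by (intro prod.cong) (auto simp: F'_def)
  also have "\<dots> = (\<Prod>j\<in>J. emeasure (measure_pmf R) (F j))"
    using n by (simp add: prod.inter_restrict[symmetric] Int_absorb1)
  finally show "emeasure (distr (iid Q) (iid R) (obs_seq ob)) (prod_emb UNIV (\<lambda>_. measure_pmf R) J (Pi\<^sub>E J F))
      = (\<Prod>j\<in>J. emeasure (measure_pmf R) (F j))" .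
qed simp_all

lemma obs_count_eq_sum_indicator:
  "real (obs_count ob \<omega> N) = (\<Sum>i<N. indicator (Collect ob) (\<omega> i))"
  by (induction N) (simp_all add: obs_count_Suc)

lemma AE_obs_count_ratio_tendsto:
  "AE \<omega> in iid Q. (\<lambda>N. obs_count ob \<omega> N / N) \<longlonglongrightarrow> measure_pmf.prob Q (Collect ob)"
  using measure_pmf.AE_iid_average_tendsto[of "indicator (Collect ob)" Q 0 1]
  by (simp add: obs_count_eq_sum_indicator)

lemma AE_observed_statistic_tendsto_iff:
  fixes Q :: "'a::countable pmf" and ob :: "'a \<Rightarrow> bool" and F :: "'a list \<Rightarrow> real"
  defines "a \<equiv> measure_pmf.prob Q (Collect ob)" and "R \<equiv> cond_pmf Q (Collect ob)"
  assumes ne: "set_pmf Q \<inter> Collect ob \<noteq> {}"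
  shows "(AE \<omega> in iid Q. (\<lambda>N. F (filter ob (map \<omega> [0..<N])) / N) \<longlonglongrightarrow> l * a) \<longleftrightarrow>
         (AE y in iid R. (\<lambda>k. F (map y [0..<k]) / k) \<longlonglongrightarrow> l)"
proof -
  let ?P = "\<lambda>y. (\<lambda>k. F (map y [0..<k]) / k) \<longlonglongrightarrow> l"
  have "a > 0" unfolding a_def using ne by (auto intro: measure_pmf_posI)
  have "AE \<omega> in iid Q. (\<lambda>N. F (filter ob (map \<omega> [0..<N])) / N) \<longlonglongrightarrow> l * a \<longleftrightarrow> ?P (obs_seq ob \<omega>)"
    using AE_obs_count_ratio_tendsto[where Q = Q and ob = ob]
  proof eventually_elim
    case (elim \<omega>)
    show ?case
      unfolding filter_map_eq_obs_seq
      by (rule LIMSEQ_counting_time_change_iff[OF _ _ elim[folded a_def] \<open>a > 0\<close>])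
        (auto simp: obs_count_Suc)
  qed
  then have "(AE \<omega> in iid Q. (\<lambda>N. F (filter ob (map \<omega> [0..<N])) / N) \<longlonglongrightarrow> l * a) \<longleftrightarrow>
      (AE \<omega> in iid Q. ?P (obs_seq ob \<omega>))"
    by (auto elim: AE_mp)
  also have "\<dots> \<longleftrightarrow> (AE y in distr (iid Q) (iid R) (obs_seq ob). ?P y)"
  proof (rule AE_distr_iff[symmetric, OF measurable_obs_seq])
    have [measurable]: "(\<lambda>y. F (map y [0..<k]) / k) \<in> borel_measurable (iid R)" for k
      by (rule measurable_prefix_fun[of borel "\<lambda>xs. F xs / k"]) simp
    show "{y \<in> space (iid R). ?P y} \<in> sets (iid R)" by measurable
  qed
  also have "\<dots> \<longleftrightarrow> (AE y in iid R. ?P y)"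
    by (simp only: distr_obs_seq[OF ne, folded R_def])
  finally show ?thesis .
qed

lemma AE_observed_statistic_tendsto_scaled:
  fixes Q Q' :: "'a::countable pmf" and ob :: "'a \<Rightarrow> bool" and F :: "'a list \<Rightarrow> real"
  assumes scaled: "\<And>x. ob x \<Longrightarrow> pmf Q' x = c * pmf Q x" and "c > 0"
    and ne: "set_pmf Q \<inter> Collect ob \<noteq> {}"
    and lim: "AE \<omega> in iid Q'. (\<lambda>N. F (filter ob (map \<omega> [0..<N])) / N) \<longlonglongrightarrow> 1"
  shows "AE \<omega> in iid Q. (\<lambda>N. F (filter ob (map \<omega> [0..<N])) / N) \<longlonglongrightarrow> 1 / c"
proof -
  let ?a = "measure_pmf.prob Q (Collect ob)"
  have "set_pmf Q' \<inter> Collect ob = set_pmf Q \<inter> Collect ob"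
    by (rule set_pmf_inter_eq_scaled[where c = c]) (simp_all add: scaled \<open>c > 0\<close>)
  then have ne': "set_pmf Q' \<inter> Collect ob \<noteq> {}" using ne by simp
  have cond: "cond_pmf Q' (Collect ob) = cond_pmf Q (Collect ob)"
    by (rule cond_pmf_eq_scaled[where c = c]) (simp_all add: scaled \<open>c > 0\<close> ne)
  have "?a > 0" using ne by (auto intro: measure_pmf_posI)
  have "measure_pmf.prob Q' (Collect ob) = c * ?a"
    by (rule measure_pmf_eq_scaled) (simp add: scaled)
  then have one: "1 / (c * ?a) * measure_pmf.prob Q' (Collect ob) = 1"
    using \<open>?a > 0\<close> \<open>c > 0\<close> by simp
  from lim have "AE \<omega> in iid Q'. (\<lambda>N. F (filter ob (map \<omega> [0..<N])) / N)
      \<longlonglongrightarrow> 1 / (c * ?a) * measure_pmf.prob Q' (Collect ob)"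
    by (simp only: one)
  then have "AE y in iid (cond_pmf Q' (Collect ob)). (\<lambda>k. F (map y [0..<k]) / k) \<longlonglongrightarrow> 1 / (c * ?a)"
    by (simp only: AE_observed_statistic_tendsto_iff[OF ne'])
  then have "AE y in iid (cond_pmf Q (Collect ob)). (\<lambda>k. F (map y [0..<k]) / k) \<longlonglongrightarrow> 1 / (c * ?a)"
    by (simp only: cond)
  then have "AE \<omega> in iid Q. (\<lambda>N. F (filter ob (map \<omega> [0..<N])) / N) \<longlonglongrightarrow> 1 / (c * ?a) * ?a"
    by (simp only: AE_observed_statistic_tendsto_iff[OF ne])
  moreover have "1 / (c * ?a) * ?a = 1 / c" using \<open>?a > 0\<close> by simp
  ultimately show ?thesis by simp
qed

section \<open>Inclusion patterns\<close>

definition observable :: "nat \<Rightarrow> bool list \<Rightarrow> bool" where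
  "observable L x \<longleftrightarrow> x \<in> patterns L \<and> x \<noteq> zero_pattern L"

definition pattern_counts :: "nat \<Rightarrow> bool list list \<Rightarrow> bool list \<Rightarrow> nat" where
  "pattern_counts L xs x = (if observable L x then count_list xs x else 0)"

lemma card_eq_count_list_map: "card {i. i < N \<and> \<omega> i = x} = count_list (map \<omega> [0..<N]) x"
proof (induction N)
  case (Suc N)
  have "{i. i < Suc N \<and> \<omega> i = x} = {i. i < N \<and> \<omega> i = x} \<union> (if \<omega> N = x then {N} else {})"
    by (auto simp: less_Suc_eq)
  then show ?case using Suc by simp
qed simp

lemma count_list_filter: "count_list (filter P xs) x = (if P x then count_list xs x else 0)"
  by (induction xs) auto

lemma obs_counts_eq_pattern_counts:
  "obs_counts L \<omega> N = pattern_counts L (filter (observable L) (map \<omega> [0..<N]))"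
  by (auto simp: obs_counts_def pattern_counts_def observable_def count_list_filter card_eq_count_list_map)

lemma finite_patterns: "finite (patterns L)"
  using finite_lists_length_eq[of "UNIV :: bool set" L] by (simp add: patterns_def)

lemma patterns_Suc: "patterns (Suc L) = Cons True ` patterns L \<union> Cons False ` patterns L"
proof (intro set_eqI iffI)
  fix x assume "x \<in> patterns (Suc L)"
  then show "x \<in> Cons True ` patterns L \<union> Cons False ` patterns L"
    by (cases x) (auto simp: patterns_def)
qed (auto simp: patterns_def)

lemma sum_patterns_sign_eq_0:
  assumes "L \<ge> 1"
  shows "(\<Sum>x\<in>patterns L. (-1::real) ^ (pat_weight x + 1)) = 0"
proof -
  obtain L' where L': "L = Suc L'" using assms by (cases L) auto
  have "(\<Sum>x\<in>patterns (Suc L'). (-1::real) ^ (pat_weight x + 1)) =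
        (\<Sum>x\<in>Cons True ` patterns L'. (-1::real) ^ (pat_weight x + 1)) +
        (\<Sum>x\<in>Cons False ` patterns L'. (-1::real) ^ (pat_weight x + 1))"
    unfolding patterns_Suc by (rule sum.union_disjoint) (auto simp: finite_patterns)
  also have "\<dots> = (\<Sum>x\<in>patterns L'. (-1::real) ^ (pat_weight x + 2)) +
        (\<Sum>x\<in>patterns L'. (-1::real) ^ (pat_weight x + 1))"
    by (simp add: sum.reindex pat_weight_def)
  also have "\<dots> = 0"
    by (simp add: sum.distrib[symmetric])
  finally show ?thesis using L' by simp
qed

lemma positive_model_observable_nonempty:
  assumes "L \<ge> 1" "positive_model L Q"
  shows "set_pmf Q \<inter> Collect (observable L) \<noteq> {}"
proof -
  obtain L' where "L = Suc L'" using assms(1) by (cases L) auto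
  then have "True # replicate L' False \<in> set_pmf Q \<inter> Collect (observable L)"
    using assms(2) by (simp add: positive_model_def observable_def patterns_def zero_pattern_def)
  then show ?thesis by blast
qed

lemma positive_model_tilted:
  assumes "positive_model L Q" "c > 0"
    and "pmf Q' (zero_pattern L) = c * pmf Q (zero_pattern L) * exp t"
    and "\<And>x. x \<noteq> zero_pattern L \<Longrightarrow> pmf Q' x = c * pmf Q x"
  shows "positive_model L Q'"
proof -
  have "pmf Q' x \<noteq> 0 \<longleftrightarrow> pmf Q x \<noteq> 0" for x
    using assms(2-4) by (cases "x = zero_pattern L") auto
  then show ?thesis
    using assms(1) by (simp add: positive_model_def set_pmf_eq)
qed

lemma full_interaction_tilted:
  assumes "L \<ge> 1" "positive_model L Q" "c > 0"
    and "pmf Q' (zero_pattern L) = c * pmf Q (zero_pattern L) * exp t"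
    and "\<And>x. x \<noteq> zero_pattern L \<Longrightarrow> pmf Q' x = c * pmf Q x"
  shows "full_interaction L Q' = full_interaction L Q - t"
proof -
  let ?z = "zero_pattern L" and ?s = "\<lambda>x. (-1::real) ^ (pat_weight x + 1)"
  have ln_Q': "ln (pmf Q' x) = ln c + ln (pmf Q x) + (if x = ?z then t else 0)"
    if "x \<in> patterns L" for x
  proof -
    have "pmf Q x > 0"
      using assms(2) that by (simp add: positive_model_def pmf_positive)
    then show ?thesis
      using assms(3-5) by (cases "x = ?z") (simp_all add: ln_mult)
  qed
  have "?z \<in> patterns L" by (simp add: patterns_def zero_pattern_def)
  have "(\<Sum>x\<in>patterns L. ?s x * (if x = ?z then t else 0)) = (\<Sum>x\<in>patterns L. if x = ?z then ?s x * t else 0)"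
    by (intro sum.cong) auto
  also have "\<dots> = - t"
    using \<open>?z \<in> patterns L\<close> by (simp add: finite_patterns pat_weight_def zero_pattern_def)
  finally have delta: "(\<Sum>x\<in>patterns L. ?s x * (if x = ?z then t else 0)) = - t" .
  \<comment> \<open>\<open>ln c\<close> cancels because the signs sum to zero\<close>
  have "full_interaction L Q' = (\<Sum>x\<in>patterns L.
      ?s x * ln c + ?s x * ln (pmf Q x) + ?s x * (if x = ?z then t else 0))"
    unfolding full_interaction_def by (intro sum.cong refl) (simp only: ln_Q' distrib_left)
  also have "\<dots> = (\<Sum>x\<in>patterns L. ?s x) * ln c + full_interaction L Q
      + (\<Sum>x\<in>patterns L. ?s x * (if x = ?z then t else 0))"
    unfolding full_interaction_def by (simp only: sum.distrib sum_distrib_right)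
  finally show ?thesis
    unfolding sum_patterns_sign_eq_0[OF assms(1)] delta by simp
qed

lemma obtain_no_interaction_model:
  assumes "L \<ge> 1" "positive_model L Q"
  defines "c \<equiv> 1 / (1 - pmf Q (zero_pattern L) + pmf Q (zero_pattern L) * exp (full_interaction L Q))"
  obtains Q' where "positive_model L Q'" "full_interaction L Q' = 0"
    and "\<And>x. observable L x \<Longrightarrow> pmf Q' x = c * pmf Q x"
proof -
  have "c > 0" unfolding c_def by (simp add: one_minus_plus_mult_exp_pos pmf_le_1)
  obtain Q' where Q'_z: "pmf Q' (zero_pattern L) = c * pmf Q (zero_pattern L) * exp (full_interaction L Q)"
    and Q'_scaled: "\<And>x. x \<noteq> zero_pattern L \<Longrightarrow> pmf Q' x = c * pmf Q x"
    using obtain_pmf_tilted_at[where Q = Q and z = "zero_pattern L" and t = "full_interaction L Q"]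
    unfolding c_def by blast
  show ?thesis
  proof (rule that)
    show "positive_model L Q'"
      by (rule positive_model_tilted[OF assms(2) \<open>c > 0\<close> Q'_z Q'_scaled])
    show "full_interaction L Q' = 0"
      using full_interaction_tilted[OF assms(1,2) \<open>c > 0\<close> Q'_z Q'_scaled] by simp
  qed (simp add: Q'_scaled observable_def)
qed

theorem theorem1:
  fixes L :: nat and Nhat :: "(bool list \<Rightarrow> nat) \<Rightarrow> real" and Q :: "bool list pmf"
  assumes "L \<ge> 2"
    and "consistent_for L Nhat (\<lambda>P. positive_model L P \<and> full_interaction L P = 0)"
    and "positive_model L Q"
  shows "AE \<omega> in iid_patterns Q.
           (\<lambda>N. (Nhat (obs_counts L \<omega> N) - real N) / real N)
             \<longlonglongrightarrow> pmf Q (zero_pattern L) * (exp (full_interaction L Q) - 1)"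
proof -
  let ?p\<^sub>0 = "pmf Q (zero_pattern L)" and ?\<gamma> = "full_interaction L Q"
  let ?F = "\<lambda>xs. Nhat (pattern_counts L xs)"
  define c where "c = 1 / (1 - ?p\<^sub>0 + ?p\<^sub>0 * exp ?\<gamma>)"
  have "L \<ge> 1" using assms(1) by simp \<comment> \<open>this is all the argument needs of \<open>L\<close>\<close>
  have "c > 0" unfolding c_def by (simp add: one_minus_plus_mult_exp_pos pmf_le_1)
  obtain Q' where "positive_model L Q'" "full_interaction L Q' = 0"
    and scaled: "\<And>x. observable L x \<Longrightarrow> pmf Q' x = c * pmf Q x"
    using obtain_no_interaction_model[OF \<open>L \<ge> 1\<close> assms(3)] unfolding c_def by blast
  then have "AE \<omega> in iid Q'. (\<lambda>N. ?F (filter (observable L) (map \<omega> [0..<N])) / N) \<longlonglongrightarrow> 1"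
    using assms(2) unfolding consistent_for_def iid_patterns_def obs_counts_eq_pattern_counts by blast
  then have "AE \<omega> in iid Q. (\<lambda>N. ?F (filter (observable L) (map \<omega> [0..<N])) / N) \<longlonglongrightarrow> 1 / c"
    using scaled \<open>c > 0\<close> positive_model_observable_nonempty[OF \<open>L \<ge> 1\<close> assms(3)]
    by (intro AE_observed_statistic_tendsto_scaled[where F = ?F and ob = "observable L"]) auto
  moreover have "1 / c = 1 + ?p\<^sub>0 * (exp ?\<gamma> - 1)"
    by (simp add: c_def algebra_simps)
  ultimately show ?thesis
    unfolding iid_patterns_def obs_counts_eq_pattern_counts
    by (auto elim!: AE_mp intro: LIMSEQ_relative_error)
qed

end
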